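(* Let $\mathcal S$ be the family of all subsets of $[n]$ of size at most $s$ (single-item $s$-unit auctions). Then for every $m\ge1$ and every sequence of valuation profiles $\vec v_1,\dots,\vec v_T\in[0,1]^n$, \[ \max_{\vec r\in\mathcal I}\sum_{t=1}^T\mathrm{Rev}(\vec r,\vec v_t)-\max_{\vec r\in\mathcal I_m}\sum_{t=1}^T\mathrm{Rev}(\vec r,\vec v_t)\le\frac{2Ts}{m}. \]
   Context: Setting: $n$ bidders with valuation profile $\vec v\in[0,1]^n$; feasible family $\mathcal S$ of sets of bidders that can be served. A VCG auction with bidder-specific reserves $\vec r$: bidders with $v_i<r_i$ are removed; if none remain nothing is allocated; otherwise a welfare-maximizing feasible set among the remaining bidders is served, and each served bidder pays the larger of $r_i$ and his VCG payment (for the $s$-unit case, the highest value among remaining bidders who are not served, or $0$ if all remaining bidders are served). $\mathrm{Rev}(\vec r,\vec v)$ is the total payment. $\mathcal I$ is the class of all such auctions with $\vec r\in[0,1]^n$, and $\mathcal I_m\subseteq\mathcal I$ those with every $r_i\in\{1/m,2/m,\dots,1\}$. *)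

theory Defs
  imports Complex_Main
begin

text \<open>Bidders are 0..n-1; valuations and reserves are functions nat => real,
only their values on bidders matter. The feasible family is all sets of
at most s bidders (s-unit auctions).\<close>

definition remaining :: "nat \<Rightarrow> (nat \<Rightarrow> real) \<Rightarrow> (nat \<Rightarrow> real) \<Rightarrow> nat set" where
  "remaining n r v = {i. i < n \<and> r i \<le> v i}"

definition feasible :: "nat \<Rightarrow> nat set \<Rightarrow> bool" where
  "feasible s A \<longleftrightarrow> card A \<le> s"

definition welfare_max :: "nat \<Rightarrow> nat \<Rightarrow> (nat \<Rightarrow> real) \<Rightarrow> (nat \<Rightarrow> real) \<Rightarrow> nat set \<Rightarrow> bool" where
  "welfare_max n s r v A \<longleftrightarrow> A \<subseteq> remaining n r v \<and> feasible s A \<and>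
     (\<forall>B. B \<subseteq> remaining n r v \<and> feasible s B \<longrightarrow> sum v B \<le> sum v A)"

definition served :: "nat \<Rightarrow> nat \<Rightarrow> (nat \<Rightarrow> real) \<Rightarrow> (nat \<Rightarrow> real) \<Rightarrow> nat set" where
  "served n s r v = (SOME A. welfare_max n s r v A)"

text \<open>VCG payment in the s-unit case: highest value among remaining bidders not served, or 0.\<close>
definition vcg_price :: "nat \<Rightarrow> nat \<Rightarrow> (nat \<Rightarrow> real) \<Rightarrow> (nat \<Rightarrow> real) \<Rightarrow> real" where
  "vcg_price n s r v = Max (insert 0 (v ` (remaining n r v - served n s r v)))"

definition Rev :: "nat \<Rightarrow> nat \<Rightarrow> (nat \<Rightarrow> real) \<Rightarrow> (nat \<Rightarrow> real) \<Rightarrow> real" where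
  "Rev n s r v = (\<Sum>i\<in>served n s r v. max (r i) (vcg_price n s r v))"

definition auctions_I :: "nat \<Rightarrow> (nat \<Rightarrow> real) set" where
  "auctions_I n = {r. (\<forall>i<n. r i \<in> {0..1}) \<and> (\<forall>i\<ge>n. r i = 0)}"

definition auctions_Im :: "nat \<Rightarrow> nat \<Rightarrow> (nat \<Rightarrow> real) set" where
  "auctions_Im n m = {r. (\<forall>i<n. \<exists>k\<in>{1..m}. r i = real k / real m) \<and> (\<forall>i\<ge>n. r i = 0)}"

end

theory Submission
  imports Defs
begin

text \<open>Rounding every reserve down to the grid, and up to \<open>1/m\<close> if it is smaller,
moves it by at most \<open>d = 1/m\<close>, and on each valuation profile this costs at most
\<open>s d\<close> revenue. Served bidders of value below \<open>d\<close> paid less than \<open>d\<close> each. Every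
other served bidder still clears his new reserve, and the VCG price drops by at most
\<open>d\<close>: a positive old price is the value of an unserved bidder who, together with the
\<open>s\<close> served ones, forms \<open>s + 1\<close> bidders of at least that value that all remain, so one
of them is unserved at the new reserves. Hence a bidder served in both auctions pays at
most \<open>d\<close> less, and those who lose their slot, each paying at most his value and hence
at most the new price, are outnumbered by newly served bidders each paying at least
the new price.\<close>

lemma finite_remaining: "finite (remaining n r v)"
  unfolding remaining_def by auto

lemma welfare_max_served: "welfare_max n s r v (served n s r v)"
proof -
  let ?R = "remaining n r v"
  let ?F = "{B. B \<subseteq> ?R \<and> card B \<le> s}"
  have "finite ?F" using finite_remaining by (auto intro: finite_subset[of _ "Pow ?R"])
  moreover have "{} \<in> ?F" by auto
  ultimately obtain A where "A \<in> ?F" "sum v A = Max (sum v ` ?F)"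
    using Max_in[of "sum v ` ?F"] by fastforce
  with \<open>finite ?F\<close> have "welfare_max n s r v A"
    unfolding welfare_max_def feasible_def by (auto intro!: Max_ge)
  then show ?thesis unfolding served_def by (rule someI)
qed

lemma served_subset_remaining: "served n s r v \<subseteq> remaining n r v"
  using welfare_max_served unfolding welfare_max_def by blast

lemma card_served_le: "card (served n s r v) \<le> s"
  using welfare_max_served unfolding welfare_max_def feasible_def by blast

lemma finite_served: "finite (served n s r v)"
  using finite_remaining served_subset_remaining by (rule finite_subset[rotated])

lemma served_optimal:
  "B \<subseteq> remaining n r v \<Longrightarrow> card B \<le> s \<Longrightarrow> sum v B \<le> sum v (served n s r v)"
  using welfare_max_served unfolding welfare_max_def feasible_def by blast

lemma value_unserved_nonpos_if_underfull:
  assumes "card (served n s r v) < s" and "j \<in> remaining n r v - served n s r v"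
  shows "v j \<le> 0"
proof -
  let ?S = "served n s r v"
  have "sum v (insert j ?S) \<le> sum v ?S"
    using assms served_subset_remaining finite_served
    by (intro served_optimal) (auto simp: card_insert_if)
  with assms(2) finite_served show ?thesis by simp
qed

lemma value_unserved_le_served:
  fixes v :: "nat \<Rightarrow> real"
  assumes v0: "\<forall>i<n. 0 \<le> v i"
    and i: "i \<in> served n s r v" and j: "j \<in> remaining n r v - served n s r v"
  shows "v j \<le> v i"
proof -
  let ?S = "served n s r v"
  have "0 \<le> v i" using i served_subset_remaining v0 unfolding remaining_def by blast
  show ?thesis
  proof (cases "card ?S < s")
    case True
    from True j have "v j \<le> 0" by (rule value_unserved_nonpos_if_underfull)
    with \<open>0 \<le> v i\<close> show ?thesis by linarith
  next
    case False
    have "card ?S > 0" using i finite_served card_gt_0_iff by blast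
    then have "card (insert j (?S - {i})) \<le> s"
      using i j finite_served card_served_le by (simp add: card_Diff_singleton)
    then have "sum v (insert j (?S - {i})) \<le> sum v ?S"
      using i j served_subset_remaining[of n s r v] by (intro served_optimal) auto
    moreover have "sum v (insert j (?S - {i})) = v j + sum v ?S - v i"
      using i j finite_served by (simp add: sum_diff1)
    ultimately show ?thesis by linarith
  qed
qed

lemma vcg_price_nonneg: "0 \<le> vcg_price n s r v"
  unfolding vcg_price_def using finite_remaining by (intro Max_ge) auto

lemma vcg_price_ge_unserved:
  "j \<in> remaining n r v - served n s r v \<Longrightarrow> v j \<le> vcg_price n s r v"
  unfolding vcg_price_def using finite_remaining by (intro Max_ge) auto

lemma vcg_price_le_served:
  fixes v :: "nat \<Rightarrow> real"
  assumes "\<forall>i<n. 0 \<le> v i" and "i \<in> served n s r v"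
  shows "vcg_price n s r v \<le> v i"
proof -
  have "0 \<le> v i" using assms served_subset_remaining unfolding remaining_def by blast
  with assms show ?thesis
    unfolding vcg_price_def using finite_remaining
    by (subst Max_le_iff) (auto intro: value_unserved_le_served)
qed

lemma vcg_price_eq_0_or_unserved_value:
  "vcg_price n s r v = 0 \<or> (\<exists>k \<in> remaining n r v - served n s r v. vcg_price n s r v = v k)"
  unfolding vcg_price_def using Max_in[of "insert 0 (v ` (remaining n r v - served n s r v))"]
    finite_remaining by auto

lemma vcg_price_eq_0_if_underfull:
  "card (served n s r v) < s \<Longrightarrow> vcg_price n s r v = 0"
  using vcg_price_nonneg vcg_price_eq_0_or_unserved_value value_unserved_nonpos_if_underfull
  by (metis order_antisym)

definition payment :: "nat \<Rightarrow> nat \<Rightarrow> (nat \<Rightarrow> real) \<Rightarrow> (nat \<Rightarrow> real) \<Rightarrow> nat \<Rightarrow> real" where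
  "payment n s r v i = max (r i) (vcg_price n s r v)"

lemma Rev_eq_sum_payment: "Rev n s r v = sum (payment n s r v) (served n s r v)"
  unfolding Rev_def payment_def ..

lemma vcg_price_le_payment: "vcg_price n s r v \<le> payment n s r v i"
  unfolding payment_def by simp

lemma payment_le_value:
  fixes v :: "nat \<Rightarrow> real"
  assumes "\<forall>i<n. 0 \<le> v i" and "i \<in> served n s r v"
  shows "payment n s r v i \<le> v i"
  using assms vcg_price_le_served served_subset_remaining
  unfolding payment_def remaining_def by fastforce

lemma vcg_price_perturbed_ge:
  fixes v r r' :: "nat \<Rightarrow> real"
  assumes v0: "\<forall>i<n. 0 \<le> v i" and d: "0 < d"
    and high_remain: "\<And>i. i \<in> remaining n r v \<Longrightarrow> d \<le> v i \<Longrightarrow> i \<in> remaining n r' v"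
  shows "vcg_price n s r v - d \<le> vcg_price n s r' v"
proof (cases "vcg_price n s r v < d")
  case True
  with vcg_price_nonneg[of n s r' v] show ?thesis by linarith
next
  case False
  let ?S = "served n s r v" and ?p = "vcg_price n s r v"
  from False d obtain k where k: "k \<in> remaining n r v - ?S" "?p = v k"
    using vcg_price_eq_0_or_unserved_value[of n s r v] by auto
  from False d have "card ?S = s"
    using vcg_price_eq_0_if_underfull[of n s r v] card_served_le[of n s r v] by fastforce
  have above_price: "?p \<le> v i" if "i \<in> insert k ?S" for i
    using that k vcg_price_le_served[OF v0, where s=s and r=r] by auto
  have "insert k ?S \<subseteq> remaining n r' v"
  proof
    fix i assume i: "i \<in> insert k ?S"
    with k served_subset_remaining[of n s r v] have "i \<in> remaining n r v" by blast
    moreover from i False above_price[of i] have "d \<le> v i" by linarith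
    ultimately show "i \<in> remaining n r' v" by (rule high_remain)
  qed
  moreover have "\<not> insert k ?S \<subseteq> served n s r' v"
  proof
    assume "insert k ?S \<subseteq> served n s r' v"
    then have "card (insert k ?S) \<le> card (served n s r' v)"
      by (rule card_mono[OF finite_served])
    also have "\<dots> \<le> s" by (rule card_served_le)
    finally have "card (insert k ?S) \<le> s" .
    with k finite_served \<open>card ?S = s\<close> show False by simp
  qed
  ultimately obtain j where j: "j \<in> insert k ?S" "j \<in> remaining n r' v - served n s r' v"
    by blast
  then have "?p \<le> vcg_price n s r' v"
    using above_price[OF j(1)] vcg_price_ge_unserved[OF j(2)] by linarith
  with d show ?thesis by linarith
qed

lemma sum_unserved_le_sum_payment:
  fixes v f :: "nat \<Rightarrow> real"
  assumes A: "A \<subseteq> remaining n r v" "card A \<le> s"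
    and pos: "\<forall>i\<in>A. 0 < v i" and f: "\<forall>i\<in>A. f i \<le> v i"
  shows "sum f (A - served n s r v) \<le> sum (payment n s r v) (served n s r v - A)"
proof (cases "A \<subseteq> served n s r v")
  case True
  have "0 \<le> sum (payment n s r v) (served n s r v - A)"
    using vcg_price_nonneg vcg_price_le_payment by (intro sum_nonneg) (meson order_trans)
  with True show ?thesis by (simp add: Diff_eq_empty_iff[THEN iffD2])
next
  case False
  let ?S = "served n s r v" and ?p = "vcg_price n s r v"
  from False obtain i where "i \<in> A - ?S" by blast
  with A pos have "0 < ?p" using vcg_price_ge_unserved[of i n r v s] by fastforce
  then have "card ?S = s"
    using vcg_price_eq_0_if_underfull[of n s r v] card_served_le[of n s r v] by fastforce
  have "finite A" using A(1) finite_remaining by (rule finite_subset)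
  then have "card (A - ?S) \<le> card (?S - A)"
    using A(2) \<open>card ?S = s\<close> finite_served[of n s r v] card_Int_Diff[of A ?S] card_Int_Diff[of ?S A]
    by (simp add: Int_commute)
  have "sum f (A - ?S) \<le> real (card (A - ?S)) * ?p"
    using A(1) f vcg_price_ge_unserved[of _ n r v s] by (intro sum_bounded_above) force
  also have "\<dots> \<le> real (card (?S - A)) * ?p"
    using \<open>card (A - ?S) \<le> card (?S - A)\<close> \<open>0 < ?p\<close> by (simp add: mult_right_mono)
  also have "\<dots> \<le> sum (payment n s r v) (?S - A)"
    using vcg_price_le_payment by (intro sum_bounded_below)
  finally show ?thesis .
qed

lemma Rev_le_Rev_perturbed:
  fixes v r r' :: "nat \<Rightarrow> real"
  assumes v0: "\<forall>i<n. 0 \<le> v i" and d: "0 < d"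
    and lower: "\<forall>i<n. r i - d \<le> r' i" and upper: "\<forall>i<n. r' i \<le> max (r i) d"
  shows "Rev n s r v \<le> Rev n s r' v + real s * d"
proof -
  let ?S = "served n s r v" and ?S' = "served n s r' v"
  let ?pay = "payment n s r v" and ?pay' = "payment n s r' v"
  define A where "A = {i \<in> ?S. d \<le> v i}"
  have high_remain: "i \<in> remaining n r' v" if "i \<in> remaining n r v" "d \<le> v i" for i
    using that upper unfolding remaining_def by force
  have "A \<subseteq> ?S" unfolding A_def by blast
  then have "finite A" using finite_served by (rule finite_subset)
  have "card A \<le> s"
    using card_mono[OF finite_served \<open>A \<subseteq> ?S\<close>] card_served_le[of n s r v] by linarith
  have "A \<subseteq> remaining n r' v"
    using served_subset_remaining high_remain unfolding A_def by blast
  have price: "vcg_price n s r v - d \<le> vcg_price n s r' v"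
    using v0 d high_remain by (rule vcg_price_perturbed_ge)
  have low: "sum ?pay (?S - A) \<le> real (card (?S - A)) * d"
    using payment_le_value[OF v0] unfolding A_def by (intro sum_bounded_above) force
  have lost: "sum ?pay (A - ?S') \<le> sum ?pay' (?S' - A)"
    using \<open>A \<subseteq> remaining n r' v\<close> \<open>card A \<le> s\<close> d payment_le_value[OF v0]
    unfolding A_def by (intro sum_unserved_le_sum_payment) force+
  have kept: "sum ?pay (A \<inter> ?S') \<le> sum ?pay' (A \<inter> ?S') + real (card (A \<inter> ?S')) * d"
  proof -
    have "i < n" if "i \<in> A" for i
      using that \<open>A \<subseteq> ?S\<close> served_subset_remaining unfolding remaining_def by blast
    then have "?pay i \<le> ?pay' i + d" if "i \<in> A" for i
      using that lower price unfolding payment_def by fastforce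
    then have "sum ?pay (A \<inter> ?S') \<le> sum (\<lambda>i. ?pay' i + d) (A \<inter> ?S')"
      by (intro sum_mono) blast
    then show ?thesis by (simp add: sum.distrib)
  qed
  have "card (A \<inter> ?S') + card (?S - A) \<le> s"
    using card_mono[OF \<open>finite A\<close> Int_lower1, of ?S'] card_Diff_subset[OF \<open>finite A\<close> \<open>A \<subseteq> ?S\<close>]
      card_mono[OF finite_served \<open>A \<subseteq> ?S\<close>] card_served_le[of n s r v] by linarith
  then have "real (card (A \<inter> ?S')) * d + real (card (?S - A)) * d \<le> real s * d"
    using d by (simp flip: distrib_right of_nat_add)
  moreover have "Rev n s r v = sum ?pay (A \<inter> ?S') + sum ?pay (A - ?S') + sum ?pay (?S - A)"
    using \<open>A \<subseteq> ?S\<close> \<open>finite A\<close> finite_served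
    by (simp add: Rev_eq_sum_payment sum.subset_diff[of A ?S] sum.Int_Diff[of A _ ?S'])
  moreover have "Rev n s r' v = sum ?pay' (A \<inter> ?S') + sum ?pay' (?S' - A)"
    using finite_served by (simp add: Rev_eq_sum_payment sum.Int_Diff[of ?S' _ A] Int_commute)
  ultimately show ?thesis using low lost kept by linarith
qed

lemma Rev_le_supply:
  fixes v :: "nat \<Rightarrow> real"
  assumes v: "\<forall>i<n. v i \<in> {0..1}"
  shows "Rev n s r v \<le> real s"
proof -
  have "payment n s r v i \<le> 1" if "i \<in> served n s r v" for i
    using that v payment_le_value[of n v i s r] served_subset_remaining[of n s r v]
    unfolding remaining_def by fastforce
  then have "Rev n s r v \<le> real (card (served n s r v)) * 1"
    unfolding Rev_eq_sum_payment by (rule sum_bounded_above)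
  also have "\<dots> \<le> real s" using card_served_le by simp
  finally show ?thesis .
qed

definition round_reserve :: "nat \<Rightarrow> real \<Rightarrow> real" where
  "round_reserve m x = real (max 1 (nat \<lfloor>real m * x\<rfloor>)) / real m"

lemma round_reserve_on_grid:
  assumes "1 \<le> m" "x \<le> 1"
  shows "\<exists>k\<in>{1..m}. round_reserve m x = real k / real m"
proof -
  have "real m * x \<le> real m" using assms by simp
  then have "nat \<lfloor>real m * x\<rfloor> \<le> m" by linarith
  with assms show ?thesis unfolding round_reserve_def by force
qed

lemma round_reserve_ge:
  assumes "0 < m"
  shows "x - 1 / real m \<le> round_reserve m x"
proof -
  have "real m * x - 1 \<le> real (max 1 (nat \<lfloor>real m * x\<rfloor>))" by linarith
  then have "(real m * x - 1) / real m \<le> round_reserve m x"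
    unfolding round_reserve_def by (rule divide_right_mono) simp
  with assms show ?thesis by (simp add: field_simps)
qed

lemma round_reserve_le: "round_reserve m x \<le> max x (1 / real m)"
proof (cases "nat \<lfloor>real m * x\<rfloor> \<le> 1")
  case True
  then show ?thesis unfolding round_reserve_def by simp
next
  case False
  then have "real (max 1 (nat \<lfloor>real m * x\<rfloor>)) \<le> real m * x" by linarith
  then have "round_reserve m x \<le> x" unfolding round_reserve_def
    by (cases "m = 0") (simp_all add: field_simps)
  then show ?thesis by simp
qed

definition round_profile :: "nat \<Rightarrow> nat \<Rightarrow> (nat \<Rightarrow> real) \<Rightarrow> nat \<Rightarrow> real" where
  "round_profile n m r i = (if i < n then round_reserve m (r i) else 0)"

lemma round_profile_in_auctions_Im:
  assumes "1 \<le> m" "r \<in> auctions_I n"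
  shows "round_profile n m r \<in> auctions_Im n m"
  using assms round_reserve_on_grid unfolding auctions_I_def auctions_Im_def round_profile_def
  by auto

lemma Rev_le_Rev_round_profile:
  fixes v r :: "nat \<Rightarrow> real"
  assumes "1 \<le> m" "\<forall>i<n. 0 \<le> v i"
  shows "Rev n s r v \<le> Rev n s (round_profile n m r) v + real s / real m"
proof -
  have "Rev n s r v \<le> Rev n s (round_profile n m r) v + real s * (1 / real m)"
    using assms round_reserve_ge round_reserve_le
    by (intro Rev_le_Rev_perturbed) (auto simp: round_profile_def)
  then show ?thesis by simp
qed

lemma cSUP_le_cSUP_add:
  fixes f :: "'a \<Rightarrow> real"
  assumes "I \<noteq> {}" "bdd_above (f ` J)" "\<And>x. x \<in> I \<Longrightarrow> \<exists>y\<in>J. f x \<le> f y + c"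
  shows "(SUP x\<in>I. f x) \<le> (SUP y\<in>J. f y) + c"
proof (rule cSUP_least[OF assms(1)])
  fix x assume "x \<in> I"
  with assms(3) obtain y where "y \<in> J" "f x \<le> f y + c" by blast
  moreover from \<open>y \<in> J\<close> have "f y \<le> (SUP y\<in>J. f y)" using assms(2) by (rule cSUP_upper)
  ultimately show "f x \<le> (SUP y\<in>J. f y) + c" by linarith
qed

theorem mainTheorem6:
  fixes n s m T :: nat and vs :: "nat \<Rightarrow> nat \<Rightarrow> real"
  assumes "m \<ge> 1"
    and "\<forall>t<T. \<forall>i<n. vs t i \<in> {0..1}"
  shows "(SUP r\<in>auctions_I n. \<Sum>t<T. Rev n s r (vs t))
         - (SUP r\<in>auctions_Im n m. \<Sum>t<T. Rev n s r (vs t))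
         \<le> 2 * real T * real s / real m"
proof -
  let ?F = "\<lambda>r. \<Sum>t<T. Rev n s r (vs t)"
  \<comment> \<open>The argument gives the sharper bound \<open>T s / m\<close>.\<close>
  have "(SUP r\<in>auctions_I n. ?F r) \<le> (SUP r\<in>auctions_Im n m. ?F r) + real T * (real s / real m)"
  proof (rule cSUP_le_cSUP_add)
    show "auctions_I n \<noteq> {}" unfolding auctions_I_def by force
    have "?F r \<le> real T * real s" for r
      using sum_mono[of "{..<T}" "\<lambda>t. Rev n s r (vs t)" "\<lambda>_. real s"] assms(2) Rev_le_supply
      by simp
    then show "bdd_above (?F ` auctions_Im n m)" by (rule bdd_aboveI2)
    fix r assume "r \<in> auctions_I n"
    have "?F r \<le> (\<Sum>t<T. Rev n s (round_profile n m r) (vs t) + real s / real m)"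
      using assms Rev_le_Rev_round_profile by (intro sum_mono) auto
    then show "\<exists>r'\<in>auctions_Im n m. ?F r \<le> ?F r' + real T * (real s / real m)"
      using round_profile_in_auctions_Im[OF assms(1) \<open>r \<in> auctions_I n\<close>]
      by (auto simp: sum.distrib)
  qed
  moreover have "2 * real T * real s / real m = 2 * (real T * (real s / real m))" by simp
  moreover have "0 \<le> real T * (real s / real m)" by simp
  ultimately show ?thesis by linarith
qed

end
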